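(* Let $q\in(0,1]$, $\eta\in(0,1]$ and $m>0$. Suppose that $\sup_{T\in\mathbb T}E[|\hat u_T|^m]<\infty$ where $\hat u_T=a_T^{-1}(\hat\theta_T-\theta^* )$, and assume [A5]: there exists $\lambda>0$ with $\lim_{x\to0}p(x)/|x|^q=\lambda$. Then for every $R>0$ and $m_0>0$ there exists a constant $D_{m,m_0,R}>0$ such that $$P\bigl(\{j:\hat\theta_{T,j}=0\}\ne\mathcal J^{(0)}\bigr)<D_{m,m_0,R}\bigl(\|a_T\|^{m\eta}+c_T(m_0,R)\bigr)$$ for every $T\in\mathbb T$.
   Context: Let $\Theta\subset\mathbb R^{\mathsf p}$ be a bounded open set with closure $\overline\Theta$ and $\theta^*\in\Theta$. Let $(\Omega,\mathcal F,P)$ be a probability space, $\mathbb T\subset\mathbb R_{\ge0}$ with $\sup\mathbb T=\infty$. For each $T\in\mathbb T$, $\mathbb H_T:\Omega\times\overline\Theta\to\mathbb R$ is a random field continuous in $\theta$ for every $\omega$. The penalty is $p_T(\theta)=\sum_{j=1}^{\mathsf p}\xi_T^jp(\theta_j)$ with (possibly random) $\xi_T^j>0$ and $p:\mathbb R\to\mathbb R_{\ge0}$, $p(0)=0$; $\mathbb H^\dagger_T=\mathbb H_T-p_T$, and $\hat\theta_T:\Omega\to\overline\Theta$ is measurable with $\mathbb H^\dagger_T(\hat\theta_T)=\max_{\overline\Theta}\mathbb H^\dagger_T$. $\mathcal J^{(0)}=\{j:\theta^*_j=0\}$, $\mathcal J^{(1)}=\{j:\theta^*_j\ne0\}$; $A^{(00)}=(A_{ij})_{i,j\in\mathcal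 J^{(0)}}$. $a_T=\mathrm{diag}(\alpha_T^1,\dots,\alpha_T^{\mathsf p})$ is deterministic, invertible, with $\|a_T\|\to0$ ($\|\cdot\|$ spectral norm); $\mathbb U_T=\{u:\theta^*+a_Tu\in\overline\Theta\}$. $\tilde a_T$ is diagonal with $(\tilde a_T)_{jj}=(\xi_T^j)^{-1/q}$ for $j\in\mathcal J^{(0)}$ and $\alpha_T^j$ for $j\in\mathcal J^{(1)}$; $G_T=a_T^{-1}\tilde a_T$. For $R>0$, $\mathsf c_{T,R}=\sup\frac{|\mathbb H_T(\theta^*+a_Tu)-\mathbb H_T(\theta^*+a_Tv)|}{|u-v|^q}$ over $u,v\in\mathbb U_T$, $u\ne v$, $|a_Tu|,|a_Tv|<R\|a_T\|^{1-\eta}$; for $m_0>0$, $c_T(m_0,R)=E[|\mathsf c_{T,R}|^{m_0}\|G_T^{(00)}\|^{qm_0}]$ (possibly $\infty$). *)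

theory Defs
  imports "HOL-Probability.Probability"
begin

text \<open>Diagonal matrices \<open>diag(d_1,...,d_p)\<close> are represented by their diagonal
  \<open>d :: 'p \<Rightarrow> real\<close>.  Action of the diagonal matrix on a vector.\<close>
definition diag_apply :: "('p::finite \<Rightarrow> real) \<Rightarrow> real^'p \<Rightarrow> real^'p" where
  "diag_apply d u = (\<chi> j. d j * u $ j)"

text \<open>Spectral norm of the principal submatrix \<open>(d_j)_{j \<in> S}\<close> of a diagonal matrix:
  the largest absolute value of a diagonal entry (0 for the empty submatrix).\<close>
definition diag_norm_on :: "'p set \<Rightarrow> ('p::finite \<Rightarrow> real) \<Rightarrow> real" where
  "diag_norm_on S d = Max (insert 0 ((\<lambda>j. \<bar>d j\<bar>) ` S))"

abbreviation diag_norm :: "('p::finite \<Rightarrow> real) \<Rightarrow> real" where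
  "diag_norm d \<equiv> diag_norm_on UNIV d"

definition enn_powr :: "ennreal \<Rightarrow> real \<Rightarrow> ennreal" where
  "enn_powr x r = (if x = \<infinity> then \<infinity> else ennreal (enn2real x powr r))"

definition UU :: "(real^'p) set \<Rightarrow> real^'p \<Rightarrow> ('p::finite \<Rightarrow> real) \<Rightarrow> (real^'p) set" where
  "UU \<Theta> \<theta>s a = {u. \<theta>s + diag_apply a u \<in> closure \<Theta>}"

text \<open>The random Hoelder-type constant \<open>c_{T,R}(\<omega>)\<close> (a supremum, possibly \<open>\<infinity>\<close>),
  for a fixed \<open>T\<close> and \<open>\<omega>\<close>: \<open>Hw = \<bbbH>_T(\<omega>,\<cdot>)\<close>, \<open>a\<close> = diagonal of \<open>a_T\<close>.\<close>
definition cTR :: "real \<Rightarrow> real \<Rightarrow> (real^'p) set \<Rightarrow> real^'p \<Rightarrow> ('p::finite \<Rightarrow> real)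
    \<Rightarrow> (real^'p \<Rightarrow> real) \<Rightarrow> real \<Rightarrow> ennreal" where
  "cTR q \<eta> \<Theta> \<theta>s a Hw R =
     (SUP (u, v) \<in> {(u, v). u \<in> UU \<Theta> \<theta>s a \<and> v \<in> UU \<Theta> \<theta>s a \<and> u \<noteq> v \<and>
                    norm (diag_apply a u) < R * diag_norm a powr (1 - \<eta>) \<and>
                    norm (diag_apply a v) < R * diag_norm a powr (1 - \<eta>)}.
        ennreal (\<bar>Hw (\<theta>s + diag_apply a u) - Hw (\<theta>s + diag_apply a v)\<bar> / norm (u - v) powr q))"

text \<open>Diagonal of \<open>G_T = a_T^{-1} \<tilde>a_T\<close> at \<open>\<omega>\<close>; only the entries \<open>j \<in> \<J>^{(0)}\<close> are used,
  where it equals \<open>(\<xi>_T^j)^{-1/q} / \<alpha>_T^j\<close>.\<close>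
definition Gdiag :: "real \<Rightarrow> (real^'p) \<Rightarrow> ('p::finite \<Rightarrow> real) \<Rightarrow> ('p \<Rightarrow> real) \<Rightarrow> 'p \<Rightarrow> real" where
  "Gdiag q \<theta>s a \<xi> j = (if \<theta>s $ j = 0 then (\<xi> j) powr (- 1 / q) / a j else 1)"

definition cT :: "'w measure \<Rightarrow> real \<Rightarrow> real \<Rightarrow> (real^'p) set \<Rightarrow> real^'p \<Rightarrow> ('p::finite \<Rightarrow> real)
    \<Rightarrow> ('w \<Rightarrow> real^'p \<Rightarrow> real) \<Rightarrow> ('w \<Rightarrow> 'p \<Rightarrow> real) \<Rightarrow> real \<Rightarrow> real \<Rightarrow> ennreal" where
  "cT M q \<eta> \<Theta> \<theta>s a H \<xi> m0 R =
     (\<integral>\<^sup>+ \<omega>. enn_powr (cTR q \<eta> \<Theta> \<theta>s a (H \<omega>) R) m0 *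
              ennreal (diag_norm_on {j. \<theta>s $ j = 0} (Gdiag q \<theta>s a (\<xi> \<omega>)) powr (q * m0)) \<partial>M)"

end

theory Submission
  imports Defs
begin

text \<open>Write \<open>\<hat>\<theta>\<close> for the estimator and \<open>J\<^sub>0\<close> for the zero set of \<open>\<theta>*\<close>.  If \<open>\<hat>\<theta>\<close>
  is far from \<open>\<theta>*\<close> (at distance at least \<open>R \<parallel>a\<^sub>T\<parallel> powr (1 - \<eta>)\<close>, or at least a fixed
  radius \<open>\<rho>\<close>), Markov's inequality for the \<open>m\<close>-th moment of \<open>\<hat>u\<^sub>T\<close> bounds the probability by a
  multiple of \<open>\<parallel>a\<^sub>T\<parallel> powr (m \<eta>)\<close>.  Otherwise no nonzero coordinate of \<open>\<theta>*\<close> can vanish, so a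
  wrong support means \<open>\<hat>\<theta> $ j \<noteq> 0\<close> for some \<open>j \<in> J\<^sub>0\<close>.  Setting the coordinates in \<open>J\<^sub>0\<close>
  to zero gives a competitor whose penalty is smaller by at least \<open>\<lambda>/2 \<cdot> S\<close>, where
  \<open>S = (\<Sum>j\<in>J\<^sub>0. \<xi> j * \<bar>\<hat>\<theta> $ j\<bar> powr q)\<close>.  By maximality of \<open>\<hat>\<theta>\<close> this gap is at most the
  change of \<open>\<bbbH>\<^sub>T\<close>, which the Hoelder constant \<open>c\<close> and the subadditivity of \<open>t \<mapsto> t powr q\<close>
  bound by \<open>c \<cdot> g powr q \<cdot> S\<close>, with \<open>g\<close> the norm of the \<open>J\<^sub>0\<close>-block of \<open>G\<^sub>T\<close>.  So
  \<open>c powr m\<^sub>0 \<cdot> g powr (q m\<^sub>0) \<ge> (\<lambda>/2) powr m\<^sub>0\<close> on this event, and Markov's inequality bounds its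
  probability by a multiple of \<open>c\<^sub>T(m\<^sub>0, R)\<close>.\<close>

lemma powr_add_le_add_powr:
  fixes a b q :: real
  assumes "0 \<le> a" "0 \<le> b" "0 < q" "q \<le> 1"
  shows "(a + b) powr q \<le> a powr q + b powr q"
proof (cases "a + b = 0")
  case True
  then show ?thesis using assms by simp
next
  case False
  then have s: "a + b > 0" using assms by simp
  have frac: "(a + b) powr q * (x / (a + b)) \<le> x powr q" if "0 \<le> x" "x \<le> a + b" for x
  proof -
    have "(x / (a + b)) powr 1 \<le> (x / (a + b)) powr q"
      using that s assms by (intro powr_mono') auto
    then have "x / (a + b) \<le> (x / (a + b)) powr q"
      using that s by (cases "x = 0") auto
    then have "(a + b) powr q * (x / (a + b)) \<le> (a + b) powr q * (x / (a + b)) powr q"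
      by (intro mult_left_mono) auto
    also have "\<dots> = x powr q"
      using that s by (simp add: powr_mult [symmetric])
    finally show ?thesis .
  qed
  have "(a + b) powr q = (a + b) powr q * (a / (a + b)) + (a + b) powr q * (b / (a + b))"
    using s by (simp add: distrib_left [symmetric] add_divide_distrib [symmetric])
  also have "\<dots> \<le> a powr q + b powr q"
    using assms by (intro add_mono frac) auto
  finally show ?thesis .
qed

lemma sum_powr_le_sum_powr:
  fixes f :: "'a \<Rightarrow> real"
  assumes "finite A" "\<And>i. i \<in> A \<Longrightarrow> 0 \<le> f i" "0 < q" "q \<le> 1"
  shows "sum f A powr q \<le> (\<Sum>i\<in>A. f i powr q)"
  using assms
proof (induction A rule: finite_induct)
  case (insert x F)
  then have "sum f (insert x F) powr q \<le> f x powr q + sum f F powr q"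
    by (simp add: powr_add_le_add_powr sum_nonneg)
  with insert show ?case by simp
qed simp

lemma norm_powr_le_sum_abs_powr:
  fixes x :: "real^'p::finite"
  assumes "0 < q" "q \<le> 1"
  shows "norm x powr q \<le> (\<Sum>j\<in>UNIV. \<bar>x $ j\<bar> powr q)"
proof -
  have "norm x powr q \<le> (\<Sum>j\<in>UNIV. \<bar>x $ j\<bar>) powr q"
    using assms by (intro powr_mono2 norm_le_l1_cart) auto
  also have "\<dots> \<le> (\<Sum>j\<in>UNIV. \<bar>x $ j\<bar> powr q)"
    using assms by (intro sum_powr_le_sum_powr) auto
  finally show ?thesis .
qed

lemma lower_bound_near_0_of_tendsto_ratio:
  fixes f :: "real \<Rightarrow> real"
  assumes "((\<lambda>x. f x / \<bar>x\<bar> powr q) \<longlongrightarrow> l) (at 0)" "\<kappa> < l" "0 \<le> f 0"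
  shows "\<exists>\<delta>>0. \<forall>x. \<bar>x\<bar> < \<delta> \<longrightarrow> \<kappa> * \<bar>x\<bar> powr q \<le> f x"
proof -
  have "\<forall>\<^sub>F x in at 0. \<kappa> < f x / \<bar>x\<bar> powr q"
    using assms(1,2) by (rule order_tendstoD(1))
  then obtain \<delta> where \<delta>: "\<delta> > 0" "\<And>x. x \<noteq> 0 \<Longrightarrow> \<bar>x\<bar> < \<delta> \<Longrightarrow> \<kappa> < f x / \<bar>x\<bar> powr q"
    unfolding eventually_at by (auto simp: dist_real_def)
  have "\<kappa> * \<bar>x\<bar> powr q \<le> f x" if "\<bar>x\<bar> < \<delta>" for x
  proof (cases "x = 0")
    case False
    then show ?thesis using \<delta>(2) [OF False that] by (simp add: pos_less_divide_eq less_imp_le)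
  qed (use assms in simp)
  with \<delta>(1) show ?thesis by blast
qed

lemma exists_pos_le_abs_nonzero_components:
  fixes x :: "real^'p::finite"
  shows "\<exists>\<mu>>0. \<forall>j. x $ j \<noteq> 0 \<longrightarrow> \<mu> \<le> \<bar>x $ j\<bar>"
proof (intro exI conjI allI impI)
  let ?\<mu> = "Min (insert 1 ((\<lambda>j. \<bar>x $ j\<bar>) ` {j. x $ j \<noteq> 0}))"
  show "?\<mu> > 0"
    by (subst Min_gr_iff) auto
  show "?\<mu> \<le> \<bar>x $ j\<bar>" if "x $ j \<noteq> 0" for j
    using that by (intro Min_le) auto
qed

lemma radius_for_support_recovery_exists:
  fixes \<Theta> :: "(real^'p::finite) set" and pen :: "real \<Rightarrow> real"
  assumes \<Theta>: "open \<Theta>" "\<theta>s \<in> \<Theta>" and lim: "((\<lambda>x. pen x / \<bar>x\<bar> powr q) \<longlongrightarrow> l) (at 0)"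
    and \<kappa>: "\<kappa> < l" and pen0: "0 \<le> pen 0"
  obtains \<rho> where "\<rho> > 0" "ball \<theta>s \<rho> \<subseteq> \<Theta>" "\<And>j. \<theta>s $ j \<noteq> 0 \<Longrightarrow> \<rho> \<le> \<bar>\<theta>s $ j\<bar>"
    "\<And>x. \<bar>x\<bar> < \<rho> \<Longrightarrow> \<kappa> * \<bar>x\<bar> powr q \<le> pen x"
proof -
  obtain r0 where r0: "r0 > 0" "ball \<theta>s r0 \<subseteq> \<Theta>"
    using \<Theta> open_contains_ball by blast
  obtain \<mu> where \<mu>: "\<mu> > 0" "\<And>j. \<theta>s $ j \<noteq> 0 \<Longrightarrow> \<mu> \<le> \<bar>\<theta>s $ j\<bar>"
    using exists_pos_le_abs_nonzero_components by blast
  obtain \<delta> where \<delta>: "\<delta> > 0" "\<And>x. \<bar>x\<bar> < \<delta> \<Longrightarrow> \<kappa> * \<bar>x\<bar> powr q \<le> pen x"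
    using lower_bound_near_0_of_tendsto_ratio [OF lim \<kappa> pen0] by blast
  show ?thesis
  proof
    show "min r0 (min \<delta> \<mu>) > 0"
      using r0 \<delta> \<mu> by simp
    show "ball \<theta>s (min r0 (min \<delta> \<mu>)) \<subseteq> \<Theta>"
      using r0 subset_ball [of "min r0 (min \<delta> \<mu>)" r0 \<theta>s] by auto
    show "min r0 (min \<delta> \<mu>) \<le> \<bar>\<theta>s $ j\<bar>" if "\<theta>s $ j \<noteq> 0" for j
      using \<mu>(2) [OF that] by linarith
    show "\<kappa> * \<bar>x\<bar> powr q \<le> pen x" if "\<bar>x\<bar> < min r0 (min \<delta> \<mu>)" for x
      using \<delta>(2) that by simp
  qed
qed

text \<open>Unlike \<open>nn_integral_Markov_inequality\<close>, this needs no measurability of \<open>f\<close>; the integrand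
  of \<open>cT\<close> is not known to be measurable.\<close>

lemma mult_emeasure_le_nn_integral:
  assumes "A \<in> sets M" "\<And>x. x \<in> A \<Longrightarrow> ennreal t \<le> f x"
  shows "ennreal t * emeasure M A \<le> (\<integral>\<^sup>+ x. f x \<partial>M)"
proof -
  have "ennreal t * emeasure M A = (\<integral>\<^sup>+ x. ennreal t * indicator A x \<partial>M)"
    using assms by (simp add: nn_integral_cmult_indicator)
  also have "\<dots> \<le> (\<integral>\<^sup>+ x. f x \<partial>M)"
    using assms by (intro nn_integral_mono) (auto simp: indicator_def)
  finally show ?thesis .
qed

lemma ennreal_le_inverse_mult_of_mult_le:
  assumes "t > 0" "ennreal t * x \<le> y"
  shows "x \<le> ennreal (1 / t) * y"
proof -
  have "ennreal (1 / t) * ennreal t = 1"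
    using assms(1) by (simp flip: ennreal_mult)
  then have "x = ennreal (1 / t) * (ennreal t * x)"
    by (simp add: mult.assoc [symmetric])
  also have "\<dots> \<le> ennreal (1 / t) * y"
    using assms(2) by (rule mult_left_mono) simp
  finally show ?thesis .
qed

lemma SUP_less_top_imp_uniform_bound:
  fixes f :: "'a \<Rightarrow> ennreal"
  assumes "(SUP x\<in>A. f x) < \<infinity>"
  obtains K where "0 \<le> K" "\<And>x. x \<in> A \<Longrightarrow> f x \<le> ennreal K"
proof
  show "0 \<le> enn2real (SUP x\<in>A. f x)"
    by simp
  show "f x \<le> ennreal (enn2real (SUP x\<in>A. f x))" if "x \<in> A" for x
    using assms that by (auto simp: less_top intro!: SUP_upper)
qed

lemma ennreal_less_affine_bound:
  fixes e c :: ennreal and x D1 D2 :: real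
  assumes e: "e < \<infinity>" "e \<le> ennreal (D1 * x) + ennreal D2 * c"
    and x: "0 < x" and D: "0 \<le> D1" "0 \<le> D2"
  shows "e < ennreal (D1 + D2 + 1) * (ennreal x + c)"
proof (cases "c = \<infinity>")
  case True
  then show ?thesis
    using e D by (simp add: ennreal_mult_top add_nonneg_pos)
next
  case False
  then obtain y where y: "c = ennreal y" "0 \<le> y"
    by (cases c) (auto simp: top_unique)
  have lt: "D1 * x + D2 * y < (D1 + D2 + 1) * (x + y)"
  proof -
    have "(D1 + D2 + 1) * (x + y) = D1 * x + D2 * y + (D1 * y + D2 * x + x + y)"
      by (simp add: algebra_simps)
    moreover have "0 \<le> D1 * y" "0 \<le> D2 * x"
      using x D y(2) by simp_all
    ultimately show ?thesis
      using x y(2) by linarith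
  qed
  have "e \<le> ennreal (D1 * x + D2 * y)"
    using e(2) x D y by (simp add: ennreal_plus ennreal_mult)
  also have "\<dots> < ennreal ((D1 + D2 + 1) * (x + y))"
    using lt x D y(2) by (intro ennreal_lessI) auto
  also have "\<dots> = ennreal (D1 + D2 + 1) * (ennreal x + c)"
    using x D y by (simp add: ennreal_mult ennreal_plus)
  finally show ?thesis .
qed

lemma abs_le_diag_norm_on:
  fixes d :: "'p::finite \<Rightarrow> real"
  assumes "j \<in> S"
  shows "\<bar>d j\<bar> \<le> diag_norm_on S d"
  unfolding diag_norm_on_def using assms by (intro Max_ge) auto

lemma diag_norm_pos:
  fixes a :: "'p::finite \<Rightarrow> real"
  assumes "\<And>j. a j \<noteq> 0"
  shows "diag_norm a > 0"
  using abs_le_diag_norm_on [OF UNIV_I, where j = undefined and d = a] assms [of undefined] by linarith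

lemma norm_le_diag_norm_mult:
  fixes y :: "real^'p::finite" and a :: "'p \<Rightarrow> real"
  assumes "\<And>j. a j \<noteq> 0"
  shows "norm y \<le> diag_norm a * norm (\<chi> j. y $ j / a j)"
proof -
  have pos: "diag_norm a > 0"
    using assms by (rule diag_norm_pos)
  have "norm y \<le> norm (diag_norm a *\<^sub>R (\<chi> j. y $ j / a j))"
  proof (rule norm_le_componentwise_cart)
    fix j
    have "\<bar>y $ j\<bar> = \<bar>a j\<bar> * \<bar>y $ j / a j\<bar>"
      using assms [of j] by (simp add: abs_divide)
    also have "\<dots> \<le> diag_norm a * \<bar>y $ j / a j\<bar>"
      by (intro mult_right_mono abs_le_diag_norm_on) auto
    finally show "norm (y $ j) \<le> norm ((diag_norm a *\<^sub>R (\<chi> j. y $ j / a j)) $ j)"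
      using pos by (simp add: abs_mult)
  qed
  then show ?thesis using pos by simp
qed

lemma abs_Gdiag_powr:
  assumes "\<theta>s $ j = 0" "xi j > 0" "a j \<noteq> 0" "q > 0"
  shows "\<bar>Gdiag q \<theta>s a xi j\<bar> powr q = 1 / (xi j * \<bar>a j\<bar> powr q)"
proof -
  have "\<bar>Gdiag q \<theta>s a xi j\<bar> powr q = (xi j powr (-1 / q)) powr q / \<bar>a j\<bar> powr q"
    using assms by (simp add: Gdiag_def abs_divide powr_divide)
  also have "(xi j powr (-1 / q)) powr q = xi j powr (-1)"
    using assms by (simp add: powr_powr)
  also have "\<dots> = 1 / xi j"
    using assms by (simp add: powr_minus_divide)
  finally show ?thesis by simp
qed

lemma diag_norm_on_Gdiag_pos:
  assumes "\<theta>s $ j = 0" "xi j > 0" "a j \<noteq> 0"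
  shows "diag_norm_on {j. \<theta>s $ j = 0} (Gdiag q \<theta>s a xi) > 0"
proof -
  have "\<bar>Gdiag q \<theta>s a xi j\<bar> > 0"
    using assms by (simp add: Gdiag_def abs_divide)
  moreover have "\<bar>Gdiag q \<theta>s a xi j\<bar> \<le> diag_norm_on {j. \<theta>s $ j = 0} (Gdiag q \<theta>s a xi)"
    using assms(1) by (intro abs_le_diag_norm_on) simp
  ultimately show ?thesis by linarith
qed

lemma norm_rescaled_powr_le:
  fixes y :: "real^'p::finite" and a xi :: "'p \<Rightarrow> real"
  assumes a: "\<And>j. a j \<noteq> 0" and xi: "\<And>j. xi j > 0" and q: "0 < q" "q \<le> 1"
    and supp: "\<And>j. \<theta>s $ j \<noteq> 0 \<Longrightarrow> y $ j = 0"
  shows "norm (\<chi> j. y $ j / a j) powr q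
           \<le> diag_norm_on {j. \<theta>s $ j = 0} (Gdiag q \<theta>s a xi) powr q
              * (\<Sum>j | \<theta>s $ j = 0. xi j * \<bar>y $ j\<bar> powr q)"
    (is "_ \<le> ?G powr q * _")
proof -
  have "\<bar>y $ j / a j\<bar> powr q \<le> (if \<theta>s $ j = 0 then ?G powr q * (xi j * \<bar>y $ j\<bar> powr q) else 0)"
    for j
  proof (cases "\<theta>s $ j = 0")
    case True
    have "\<bar>y $ j / a j\<bar> powr q = (xi j * \<bar>y $ j\<bar> powr q) * \<bar>Gdiag q \<theta>s a xi j\<bar> powr q"
      using True a [of j] xi [of j] q by (simp add: abs_Gdiag_powr abs_divide powr_divide)
    also have "\<dots> \<le> (xi j * \<bar>y $ j\<bar> powr q) * ?G powr q"
      using True xi [of j] q by (intro mult_left_mono powr_mono2 abs_le_diag_norm_on) auto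
    finally show ?thesis using True by (simp add: mult.commute)
  qed (simp add: supp)
  then have "(\<Sum>j\<in>UNIV. \<bar>y $ j / a j\<bar> powr q)
      \<le> (\<Sum>j\<in>UNIV. if \<theta>s $ j = 0 then ?G powr q * (xi j * \<bar>y $ j\<bar> powr q) else 0)"
    by (intro sum_mono)
  also have "\<dots> = ?G powr q * (\<Sum>j | \<theta>s $ j = 0. xi j * \<bar>y $ j\<bar> powr q)"
    by (simp add: sum.If_cases sum_distrib_left)
  finally show ?thesis
    using norm_powr_le_sum_abs_powr [OF q, of "\<chi> j. y $ j / a j"] by simp
qed

lemma support_mismatch_imp_new_nonzero:
  fixes th \<theta>s :: "real^'p::finite"
  assumes mismatch: "{j. th $ j = 0} \<noteq> {j. \<theta>s $ j = 0}" and close: "norm (th - \<theta>s) < \<rho>"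
    and sep: "\<And>j. \<theta>s $ j \<noteq> 0 \<Longrightarrow> \<rho> \<le> \<bar>\<theta>s $ j\<bar>"
  shows "\<exists>j. \<theta>s $ j = 0 \<and> th $ j \<noteq> 0"
proof (rule ccontr)
  assume "\<not> ?thesis"
  moreover have "th $ j \<noteq> 0" if "\<theta>s $ j \<noteq> 0" for j
  proof
    assume "th $ j = 0"
    then have "\<bar>\<theta>s $ j\<bar> \<le> norm (th - \<theta>s)"
      using component_le_norm_cart [of "th - \<theta>s" j] by simp
    with close sep [OF that] show False by linarith
  qed
  ultimately have "{j. th $ j = 0} = {j. \<theta>s $ j = 0}" by blast
  with mismatch show False ..
qed

lemma penalty_drop_of_zeroing:
  fixes th \<theta>s :: "real^'p::finite" and xi :: "'p \<Rightarrow> real" and pen :: "real \<Rightarrow> real"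
  assumes pen0: "pen 0 = 0" and pen_lb: "\<And>x. \<bar>x\<bar> < \<rho> \<Longrightarrow> \<kappa> * \<bar>x\<bar> powr q \<le> pen x"
    and xi: "\<And>j. xi j > 0" and close: "norm (th - \<theta>s) < \<rho>"
  shows "\<kappa> * (\<Sum>j | \<theta>s $ j = 0. xi j * \<bar>th $ j\<bar> powr q)
           \<le> (\<Sum>j\<in>UNIV. xi j * pen (th $ j))
             - (\<Sum>j\<in>UNIV. xi j * pen ((\<chi> j. if \<theta>s $ j = 0 then 0 else th $ j) $ j))"
proof -
  have "\<kappa> * (\<Sum>j | \<theta>s $ j = 0. xi j * \<bar>th $ j\<bar> powr q) \<le> (\<Sum>j | \<theta>s $ j = 0. xi j * pen (th $ j))"
    unfolding sum_distrib_left
  proof (intro sum_mono)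
    fix j assume "j \<in> {j. \<theta>s $ j = 0}"
    then have "\<bar>th $ j\<bar> \<le> norm (th - \<theta>s)"
      using component_le_norm_cart [of "th - \<theta>s" j] by simp
    then have "\<kappa> * \<bar>th $ j\<bar> powr q \<le> pen (th $ j)"
      using close pen_lb by simp
    then show "\<kappa> * (xi j * \<bar>th $ j\<bar> powr q) \<le> xi j * pen (th $ j)"
      using xi [of j] mult_left_mono by (fastforce simp: algebra_simps)
  qed
  also have "\<dots> = (\<Sum>j\<in>UNIV. xi j * pen (th $ j))
      - (\<Sum>j\<in>UNIV. xi j * pen ((\<chi> j. if \<theta>s $ j = 0 then 0 else th $ j) $ j))"
    unfolding sum_subtractf [symmetric]
    by (subst sum.inter_filter [of UNIV, simplified]) (auto simp: pen0 intro!: sum.cong)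
  finally show ?thesis .
qed

lemma zeroing_new_nonzeros_lower_bound:
  fixes \<Theta> :: "(real^'p::finite) set" and \<theta>s th :: "real^'p" and a xi :: "'p \<Rightarrow> real"
    and Hw :: "real^'p \<Rightarrow> real" and pen :: "real \<Rightarrow> real"
  assumes ball: "ball \<theta>s \<rho> \<subseteq> \<Theta>" and a: "\<And>j. a j \<noteq> 0" and xi: "\<And>j. xi j > 0"
    and pen0: "pen 0 = 0" and pen_lb: "\<And>x. \<bar>x\<bar> < \<rho> \<Longrightarrow> \<kappa> * \<bar>x\<bar> powr q \<le> pen x"
    and q: "0 < q" "q \<le> 1"
    and th_in: "th \<in> closure \<Theta>"
    and max: "\<And>\<theta>. \<theta> \<in> closure \<Theta> \<Longrightarrow> Hw \<theta> - (\<Sum>j\<in>UNIV. xi j * pen (\<theta> $ j))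
                 \<le> Hw th - (\<Sum>j\<in>UNIV. xi j * pen (th $ j))"
    and close: "norm (th - \<theta>s) < \<rho>" "norm (th - \<theta>s) < r"
    and new_nonzero: "\<theta>s $ jz = 0" "th $ jz \<noteq> 0"
    and hoelder: "\<And>u v. u \<in> UU \<Theta> \<theta>s a \<Longrightarrow> v \<in> UU \<Theta> \<theta>s a \<Longrightarrow> u \<noteq> v \<Longrightarrow>
        norm (diag_apply a u) < r \<Longrightarrow> norm (diag_apply a v) < r \<Longrightarrow>
        \<bar>Hw (\<theta>s + diag_apply a u) - Hw (\<theta>s + diag_apply a v)\<bar> \<le> c * norm (u - v) powr q"
  shows "\<kappa> \<le> c * diag_norm_on {j. \<theta>s $ j = 0} (Gdiag q \<theta>s a xi) powr q"
proof -
  define G where "G = diag_norm_on {j. \<theta>s $ j = 0} (Gdiag q \<theta>s a xi)"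
  define S where "S = (\<Sum>j | \<theta>s $ j = 0. xi j * \<bar>th $ j\<bar> powr q)"
  define tt where "tt = (\<chi> j. if \<theta>s $ j = 0 then 0 else th $ j)"
  define u where "u = (\<chi> j. (th $ j - \<theta>s $ j) / a j)"
  define v where "v = (\<chi> j. (tt $ j - \<theta>s $ j) / a j)"
  have tt_close: "norm (tt - \<theta>s) \<le> norm (th - \<theta>s)"
    by (rule norm_le_componentwise_cart) (simp add: tt_def)
  with close ball have tt_in: "tt \<in> \<Theta>"
    by (auto simp: dist_norm norm_minus_commute)
  have au: "diag_apply a u = th - \<theta>s" and av: "diag_apply a v = tt - \<theta>s"
    using a by (simp_all add: diag_apply_def u_def v_def vec_eq_iff)
  have uv: "u - v = (\<chi> j. (th - tt) $ j / a j)"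
    by (simp add: u_def v_def vec_eq_iff diff_divide_distrib)
  have "(u - v) $ jz \<noteq> 0"
    using new_nonzero a [of jz] by (simp add: uv tt_def)
  then have "u \<noteq> v" by auto
  have S_pos: "S > 0"
    unfolding S_def
  proof (rule sum_pos2 [where i = jz])
    show "0 \<le> xi j * \<bar>th $ j\<bar> powr q" for j
      using xi [of j] by simp
  qed (use new_nonzero xi [of jz] in auto)
  have hoelder_step: "\<bar>Hw th - Hw tt\<bar> \<le> c * norm (u - v) powr q"
    using hoelder [of u v] \<open>u \<noteq> v\<close> th_in tt_in closure_subset close tt_close
    by (auto simp: UU_def au av)
  moreover have "norm (u - v) powr q > 0"
    using \<open>u \<noteq> v\<close> by simp
  ultimately have c: "c \<ge> 0"
    by (metis abs_ge_zero order_trans zero_le_mult_iff not_less)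
  have "\<kappa> * S \<le> (\<Sum>j\<in>UNIV. xi j * pen (th $ j)) - (\<Sum>j\<in>UNIV. xi j * pen (tt $ j))"
    unfolding S_def tt_def using pen0 pen_lb xi close(1) by (rule penalty_drop_of_zeroing)
  also have "\<dots> \<le> \<bar>Hw th - Hw tt\<bar>"
    using max [of tt] tt_in closure_subset by force
  also have "\<dots> \<le> c * norm (u - v) powr q"
    by (fact hoelder_step)
  also have "\<dots> \<le> c * (G powr q * (\<Sum>j | \<theta>s $ j = 0. xi j * \<bar>(th - tt) $ j\<bar> powr q))"
    unfolding uv G_def using a xi q c
    by (intro mult_left_mono norm_rescaled_powr_le) (auto simp: tt_def)
  also have "\<dots> = c * (G powr q * S)"
    unfolding S_def by (simp add: tt_def)
  finally show ?thesis
    using S_pos by (simp add: G_def mult.assoc [symmetric])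
qed

lemma cTR_Gdiag_lower_bound:
  fixes \<Theta> :: "(real^'p::finite) set" and \<theta>s th :: "real^'p" and a xi :: "'p \<Rightarrow> real"
    and Hw :: "real^'p \<Rightarrow> real" and pen :: "real \<Rightarrow> real"
  assumes ball: "ball \<theta>s \<rho> \<subseteq> \<Theta>" and a: "\<And>j. a j \<noteq> 0" and xi: "\<And>j. xi j > 0"
    and pen0: "pen 0 = 0" and pen_lb: "\<And>x. \<bar>x\<bar> < \<rho> \<Longrightarrow> \<kappa> * \<bar>x\<bar> powr q \<le> pen x"
    and q: "0 < q" "q \<le> 1" and \<kappa>: "0 \<le> \<kappa>" and m0: "0 < m0"
    and th_in: "th \<in> closure \<Theta>"
    and max: "\<And>\<theta>. \<theta> \<in> closure \<Theta> \<Longrightarrow> Hw \<theta> - (\<Sum>j\<in>UNIV. xi j * pen (\<theta> $ j))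
                 \<le> Hw th - (\<Sum>j\<in>UNIV. xi j * pen (th $ j))"
    and close: "norm (th - \<theta>s) < \<rho>" "norm (th - \<theta>s) < R * diag_norm a powr (1 - \<eta>)"
    and new_nonzero: "\<theta>s $ jz = 0" "th $ jz \<noteq> 0"
  shows "ennreal (\<kappa> powr m0) \<le> enn_powr (cTR q \<eta> \<Theta> \<theta>s a Hw R) m0 *
           ennreal (diag_norm_on {j. \<theta>s $ j = 0} (Gdiag q \<theta>s a xi) powr (q * m0))"
proof -
  define G where "G = diag_norm_on {j. \<theta>s $ j = 0} (Gdiag q \<theta>s a xi)"
  have G: "G > 0"
    unfolding G_def using new_nonzero(1) xi a by (rule diag_norm_on_Gdiag_pos)
  show ?thesis
  proof (cases "cTR q \<eta> \<Theta> \<theta>s a Hw R = \<infinity>")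
    case True
    then show ?thesis
      using G by (simp add: G_def enn_powr_def ennreal_top_mult)
  next
    case False
    then obtain c where c: "cTR q \<eta> \<Theta> \<theta>s a Hw R = ennreal c" "0 \<le> c"
      by (cases "cTR q \<eta> \<Theta> \<theta>s a Hw R") (auto simp: top_unique)
    have "\<kappa> \<le> c * G powr q"
      unfolding G_def
    proof (rule zeroing_new_nonzeros_lower_bound [OF ball a xi pen0 pen_lb q th_in max close new_nonzero])
      fix u v assume uv: "u \<in> UU \<Theta> \<theta>s a" "v \<in> UU \<Theta> \<theta>s a" "u \<noteq> v"
        "norm (diag_apply a u) < R * diag_norm a powr (1 - \<eta>)"
        "norm (diag_apply a v) < R * diag_norm a powr (1 - \<eta>)"
      have "ennreal (\<bar>Hw (\<theta>s + diag_apply a u) - Hw (\<theta>s + diag_apply a v)\<bar> / norm (u - v) powr q)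
          \<le> ennreal c"
        unfolding c(1) [symmetric] cTR_def by (rule SUP_upper2 [of "(u, v)"]) (use uv in auto)
      then show "\<bar>Hw (\<theta>s + diag_apply a u) - Hw (\<theta>s + diag_apply a v)\<bar> \<le> c * norm (u - v) powr q"
        using c(2) uv(3) by (simp add: divide_le_eq)
    qed
    then have "\<kappa> powr m0 \<le> (c * G powr q) powr m0"
      using \<kappa> m0 by (intro powr_mono2) auto
    also have "\<dots> = c powr m0 * G powr (q * m0)"
      using c G by (simp add: powr_mult powr_powr)
    finally show ?thesis
      using c G by (simp add: G_def enn_powr_def ennreal_mult [symmetric] ennreal_leI)
  qed
qed

lemma emeasure_tail_le_rescaled_moment:
  fixes Y :: "'w \<Rightarrow> real^'p::finite" and a :: "'p \<Rightarrow> real"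
  assumes Y: "Y \<in> borel_measurable M" and a: "\<And>j. a j \<noteq> 0" and r: "r > 0" and m: "m > 0"
    and moment: "(\<integral>\<^sup>+ \<omega>. ennreal (norm (\<chi> j. Y \<omega> $ j / a j) powr m) \<partial>M) \<le> ennreal K"
  shows "emeasure M {\<omega> \<in> space M. r \<le> norm (Y \<omega>)} \<le> ennreal (K * (diag_norm a / r) powr m)"
proof -
  define A where "A = {\<omega> \<in> space M. r \<le> norm (Y \<omega>)}"
  define t where "t = (r / diag_norm a) powr m"
  have na: "diag_norm a > 0"
    using a by (rule diag_norm_pos)
  have t: "t > 0"
    unfolding t_def using r na by simp
  have "ennreal t * emeasure M A \<le> (\<integral>\<^sup>+ \<omega>. ennreal (norm (\<chi> j. Y \<omega> $ j / a j) powr m) \<partial>M)"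
  proof (rule mult_emeasure_le_nn_integral)
    show "A \<in> sets M"
      unfolding A_def using Y by measurable
    fix \<omega> assume "\<omega> \<in> A"
    moreover have "norm (Y \<omega>) \<le> diag_norm a * norm (\<chi> j. Y \<omega> $ j / a j)"
      using a by (rule norm_le_diag_norm_mult)
    ultimately have "r \<le> diag_norm a * norm (\<chi> j. Y \<omega> $ j / a j)"
      by (auto simp: A_def)
    then have "r / diag_norm a \<le> norm (\<chi> j. Y \<omega> $ j / a j)"
      using na by (simp add: divide_le_eq mult.commute)
    then show "ennreal t \<le> ennreal (norm (\<chi> j. Y \<omega> $ j / a j) powr m)"
      unfolding t_def using r na m by (intro ennreal_leI powr_mono2) auto
  qed
  also have "\<dots> \<le> ennreal K"
    by (fact moment)
  finally have "emeasure M A \<le> ennreal (1 / t) * ennreal K"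
    using t by (intro ennreal_le_inverse_mult_of_mult_le)
  also have "\<dots> = ennreal (K * (diag_norm a / r) powr m)"
  proof -
    have "1 / t = (diag_norm a / r) powr m"
      unfolding t_def using r na by (simp add: powr_divide)
    then show ?thesis
      by (simp add: ennreal_mult'' mult.commute)
  qed
  finally show ?thesis
    unfolding A_def .
qed

lemma (in prob_space) emeasure_tail_le_diag_norm_powr:
  fixes Y :: "'a \<Rightarrow> real^'p::finite" and a :: "'p \<Rightarrow> real"
  assumes Y: "Y \<in> borel_measurable M" and a: "\<And>j. a j \<noteq> 0" and m: "m > 0"
    and moment: "(\<integral>\<^sup>+ \<omega>. ennreal (norm (\<chi> j. Y \<omega> $ j / a j) powr m) \<partial>M) \<le> ennreal K"
    and K: "K \<ge> 0" and \<rho>: "\<rho> > 0" and \<eta>: "0 < \<eta>" "\<eta> \<le> 1"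
  shows "emeasure M {\<omega> \<in> space M. \<rho> \<le> norm (Y \<omega>)}
           \<le> ennreal ((1 + K / \<rho> powr m) * diag_norm a powr (m * \<eta>))"
proof (cases "diag_norm a \<le> 1")
  case True
  have na: "diag_norm a > 0"
    using a by (rule diag_norm_pos)
  have "emeasure M {\<omega> \<in> space M. \<rho> \<le> norm (Y \<omega>)} \<le> ennreal (K * (diag_norm a / \<rho>) powr m)"
    using Y a \<rho> m moment by (rule emeasure_tail_le_rescaled_moment)
  also have "K * (diag_norm a / \<rho>) powr m \<le> (1 + K / \<rho> powr m) * diag_norm a powr (m * \<eta>)"
  proof -
    have "diag_norm a powr m \<le> diag_norm a powr (m * \<eta>)"
      using True na m \<eta> by (intro powr_mono') (auto simp: mult_le_cancel_left1)
    then have "K / \<rho> powr m * diag_norm a powr m \<le> K / \<rho> powr m * diag_norm a powr (m * \<eta>)"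
      using K \<rho> by (intro mult_left_mono) auto
    then show ?thesis
      using \<rho> by (simp add: powr_divide distrib_right add_increasing)
  qed
  finally show ?thesis
    by (simp add: ennreal_leI)
next
  case False
  then have "1 \<le> diag_norm a powr (m * \<eta>)"
    using m \<eta> by (intro ge_one_powr_ge_zero) auto
  then have "1 \<le> (1 + K / \<rho> powr m) * diag_norm a powr (m * \<eta>)"
    using K \<rho> by (simp add: distrib_right add_increasing2)
  then have "(1 :: ennreal) \<le> ennreal ((1 + K / \<rho> powr m) * diag_norm a powr (m * \<eta>))"
    by (simp add: ennreal_leI)
  with emeasure_le_1 show ?thesis
    by (rule order_trans)
qed

lemma (in prob_space) emeasure_large_deviation_le:
  fixes Y :: "'a \<Rightarrow> real^'p::finite" and a :: "'p \<Rightarrow> real"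
  assumes Y: "Y \<in> borel_measurable M" and a: "\<And>j. a j \<noteq> 0" and m: "m > 0"
    and moment: "(\<integral>\<^sup>+ \<omega>. ennreal (norm (\<chi> j. Y \<omega> $ j / a j) powr m) \<partial>M) \<le> ennreal K"
    and K: "K \<ge> 0" and R: "R > 0" and \<rho>: "\<rho> > 0" and \<eta>: "0 < \<eta>" "\<eta> \<le> 1"
  shows "emeasure M {\<omega> \<in> space M. R * diag_norm a powr (1 - \<eta>) \<le> norm (Y \<omega>) \<or> \<rho> \<le> norm (Y \<omega>)}
           \<le> ennreal ((K / R powr m + 1 + K / \<rho> powr m) * diag_norm a powr (m * \<eta>))"
proof -
  define r where "r = R * diag_norm a powr (1 - \<eta>)"
  define x where "x = diag_norm a powr (m * \<eta>)"
  have na: "diag_norm a > 0"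
    using a by (rule diag_norm_pos)
  have "(diag_norm a / r) powr m = x / R powr m"
    unfolding x_def r_def using na R
    by (simp add: powr_diff powr_divide powr_mult powr_powr mult.commute)
  then have far_r: "emeasure M {\<omega> \<in> space M. r \<le> norm (Y \<omega>)} \<le> ennreal (K / R powr m * x)"
    using emeasure_tail_le_rescaled_moment [OF Y a _ m moment, of r] na R by (simp add: r_def)
  have "{\<omega> \<in> space M. r \<le> norm (Y \<omega>) \<or> \<rho> \<le> norm (Y \<omega>)}
      = {\<omega> \<in> space M. r \<le> norm (Y \<omega>)} \<union> {\<omega> \<in> space M. \<rho> \<le> norm (Y \<omega>)}"
    by auto
  then have "emeasure M {\<omega> \<in> space M. r \<le> norm (Y \<omega>) \<or> \<rho> \<le> norm (Y \<omega>)}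
      \<le> emeasure M {\<omega> \<in> space M. r \<le> norm (Y \<omega>)} + emeasure M {\<omega> \<in> space M. \<rho> \<le> norm (Y \<omega>)}"
    using Y by (simp only:) (intro emeasure_subadditive; measurable)
  also have "\<dots> \<le> ennreal (K / R powr m * x) + ennreal ((1 + K / \<rho> powr m) * x)"
    unfolding x_def
    by (intro add_mono far_r [unfolded x_def] emeasure_tail_le_diag_norm_powr Y a m moment K \<rho> \<eta>)
  also have "\<dots> = ennreal ((K / R powr m + 1 + K / \<rho> powr m) * x)"
    using K R \<rho> by (simp add: x_def ennreal_plus [symmetric] algebra_simps del: ennreal_plus)
  finally show ?thesis
    unfolding r_def x_def .
qed

lemma emeasure_small_deviation_new_nonzero_le:
  fixes M :: "'w measure" and \<Theta> :: "(real^'p::finite) set" and \<theta>s :: "real^'p"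
    and \<theta>hat :: "'w \<Rightarrow> real^'p" and Hw :: "'w \<Rightarrow> real^'p \<Rightarrow> real"
    and xi :: "'w \<Rightarrow> 'p \<Rightarrow> real" and a :: "'p \<Rightarrow> real" and pen :: "real \<Rightarrow> real"
  assumes ball: "ball \<theta>s \<rho> \<subseteq> \<Theta>" and a: "\<And>j. a j \<noteq> 0"
    and xi: "\<And>\<omega> j. \<omega> \<in> space M \<Longrightarrow> xi \<omega> j > 0"
    and pen0: "pen 0 = 0" and pen_lb: "\<And>x. \<bar>x\<bar> < \<rho> \<Longrightarrow> \<kappa> * \<bar>x\<bar> powr q \<le> pen x"
    and q: "0 < q" "q \<le> 1" and \<kappa>: "0 < \<kappa>" and m0: "0 < m0"
    and \<theta>hat_meas: "\<theta>hat \<in> borel_measurable M"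
    and \<theta>hat_in: "\<And>\<omega>. \<omega> \<in> space M \<Longrightarrow> \<theta>hat \<omega> \<in> closure \<Theta>"
    and max: "\<And>\<omega> \<theta>. \<omega> \<in> space M \<Longrightarrow> \<theta> \<in> closure \<Theta> \<Longrightarrow>
        Hw \<omega> \<theta> - (\<Sum>j\<in>UNIV. xi \<omega> j * pen (\<theta> $ j))
          \<le> Hw \<omega> (\<theta>hat \<omega>) - (\<Sum>j\<in>UNIV. xi \<omega> j * pen (\<theta>hat \<omega> $ j))"
  shows "emeasure M {\<omega> \<in> space M. norm (\<theta>hat \<omega> - \<theta>s) < R * diag_norm a powr (1 - \<eta>) \<and>
            norm (\<theta>hat \<omega> - \<theta>s) < \<rho> \<and> (\<exists>j. \<theta>s $ j = 0 \<and> \<theta>hat \<omega> $ j \<noteq> 0)}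
           \<le> ennreal (1 / \<kappa> powr m0) * cT M q \<eta> \<Theta> \<theta>s a Hw xi m0 R"
    (is "emeasure M ?A \<le> _")
proof (rule ennreal_le_inverse_mult_of_mult_le)
  show "\<kappa> powr m0 > 0"
    using \<kappa> by simp
  have "?A \<in> sets M"
    using \<theta>hat_meas by measurable
  then show "ennreal (\<kappa> powr m0) * emeasure M ?A \<le> cT M q \<eta> \<Theta> \<theta>s a Hw xi m0 R"
    unfolding cT_def
  proof (rule mult_emeasure_le_nn_integral)
    fix \<omega> assume "\<omega> \<in> ?A"
    then obtain jz where \<omega>: "\<omega> \<in> space M" and new_nonzero: "\<theta>s $ jz = 0" "\<theta>hat \<omega> $ jz \<noteq> 0"
      and close: "norm (\<theta>hat \<omega> - \<theta>s) < \<rho>" "norm (\<theta>hat \<omega> - \<theta>s) < R * diag_norm a powr (1 - \<eta>)"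
      by auto
    show "ennreal (\<kappa> powr m0) \<le> enn_powr (cTR q \<eta> \<Theta> \<theta>s a (Hw \<omega>) R) m0 *
            ennreal (diag_norm_on {j. \<theta>s $ j = 0} (Gdiag q \<theta>s a (xi \<omega>)) powr (q * m0))"
      using cTR_Gdiag_lower_bound [OF ball a xi [OF \<omega>] pen0 pen_lb q less_imp_le [OF \<kappa>] m0
          \<theta>hat_in [OF \<omega>] max [OF \<omega>] close new_nonzero] .
  qed
qed

lemma (in prob_space) emeasure_support_mismatch_le:
  fixes \<Theta> :: "(real^'p::finite) set" and \<theta>s :: "real^'p"
    and \<theta>hat :: "'a \<Rightarrow> real^'p" and Hw :: "'a \<Rightarrow> real^'p \<Rightarrow> real"
    and xi :: "'a \<Rightarrow> 'p \<Rightarrow> real" and a :: "'p \<Rightarrow> real" and pen :: "real \<Rightarrow> real"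
  assumes \<rho>: "\<rho> > 0" and ball: "ball \<theta>s \<rho> \<subseteq> \<Theta>"
    and sep: "\<And>j. \<theta>s $ j \<noteq> 0 \<Longrightarrow> \<rho> \<le> \<bar>\<theta>s $ j\<bar>"
    and a: "\<And>j. a j \<noteq> 0" and xi: "\<And>\<omega> j. \<omega> \<in> space M \<Longrightarrow> xi \<omega> j > 0"
    and pen0: "pen 0 = 0" and pen_lb: "\<And>x. \<bar>x\<bar> < \<rho> \<Longrightarrow> \<kappa> * \<bar>x\<bar> powr q \<le> pen x"
    and q: "0 < q" "q \<le> 1" and \<kappa>: "0 < \<kappa>" and m0: "0 < m0"
    and m: "0 < m" and \<eta>: "0 < \<eta>" "\<eta> \<le> 1" and R: "0 < R"
    and \<theta>hat_meas: "\<theta>hat \<in> borel_measurable M"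
    and \<theta>hat_in: "\<And>\<omega>. \<omega> \<in> space M \<Longrightarrow> \<theta>hat \<omega> \<in> closure \<Theta>"
    and max: "\<And>\<omega> \<theta>. \<omega> \<in> space M \<Longrightarrow> \<theta> \<in> closure \<Theta> \<Longrightarrow>
        Hw \<omega> \<theta> - (\<Sum>j\<in>UNIV. xi \<omega> j * pen (\<theta> $ j))
          \<le> Hw \<omega> (\<theta>hat \<omega>) - (\<Sum>j\<in>UNIV. xi \<omega> j * pen (\<theta>hat \<omega> $ j))"
    and moment: "(\<integral>\<^sup>+ \<omega>. ennreal (norm (\<chi> j. (\<theta>hat \<omega> $ j - \<theta>s $ j) / a j) powr m) \<partial>M) \<le> ennreal K"
    and K: "0 \<le> K"
  shows "emeasure M {\<omega> \<in> space M. {j. \<theta>hat \<omega> $ j = 0} \<noteq> {j. \<theta>s $ j = 0}}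
           \<le> ennreal ((K / R powr m + 1 + K / \<rho> powr m) * diag_norm a powr (m * \<eta>))
             + ennreal (1 / \<kappa> powr m0) * cT M q \<eta> \<Theta> \<theta>s a Hw xi m0 R"
proof -
  define r where "r = R * diag_norm a powr (1 - \<eta>)"
  define far where "far = {\<omega> \<in> space M. r \<le> norm (\<theta>hat \<omega> - \<theta>s) \<or> \<rho> \<le> norm (\<theta>hat \<omega> - \<theta>s)}"
  define near where "near = {\<omega> \<in> space M. norm (\<theta>hat \<omega> - \<theta>s) < r \<and> norm (\<theta>hat \<omega> - \<theta>s) < \<rho> \<and>
                               (\<exists>j. \<theta>s $ j = 0 \<and> \<theta>hat \<omega> $ j \<noteq> 0)}"
  have far_meas: "far \<in> sets M"
    unfolding far_def using \<theta>hat_meas by measurable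
  have near_meas: "near \<in> sets M"
    unfolding near_def using \<theta>hat_meas by measurable
  have "{\<omega> \<in> space M. {j. \<theta>hat \<omega> $ j = 0} \<noteq> {j. \<theta>s $ j = 0}} \<subseteq> far \<union> near"
    unfolding far_def near_def not_le [symmetric]
    using support_mismatch_imp_new_nonzero [OF _ _ sep] by (blast dest: not_le_imp_less)
  then have "emeasure M {\<omega> \<in> space M. {j. \<theta>hat \<omega> $ j = 0} \<noteq> {j. \<theta>s $ j = 0}}
      \<le> emeasure M (far \<union> near)"
    using far_meas near_meas by (intro emeasure_mono) auto
  also have "\<dots> \<le> emeasure M far + emeasure M near"
    using far_meas near_meas by (rule emeasure_subadditive)
  also have "emeasure M far \<le> ennreal ((K / R powr m + 1 + K / \<rho> powr m) * diag_norm a powr (m * \<eta>))"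
    unfolding far_def r_def using moment
    by (intro emeasure_large_deviation_le a m K R \<rho> \<eta>) (use \<theta>hat_meas in \<open>simp_all\<close>)
  also have "emeasure M near \<le> ennreal (1 / \<kappa> powr m0) * cT M q \<eta> \<Theta> \<theta>s a Hw xi m0 R"
    unfolding near_def r_def
    by (rule emeasure_small_deviation_new_nonzero_le [OF ball a xi pen0 pen_lb q \<kappa> m0 \<theta>hat_meas \<theta>hat_in max])
  finally show ?thesis
    by (simp add: add_mono)
qed

theorem corollary1:
  fixes M :: "'w measure"
    and \<Theta> :: "(real^'p::finite) set" and \<theta>s :: "real^'p"
    and TT :: "real set"
    and H :: "real \<Rightarrow> 'w \<Rightarrow> real^'p \<Rightarrow> real"
    and \<xi> :: "real \<Rightarrow> 'w \<Rightarrow> 'p \<Rightarrow> real"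
    and pen :: "real \<Rightarrow> real"
    and \<alpha> :: "real \<Rightarrow> 'p \<Rightarrow> real"
    and \<theta>hat :: "real \<Rightarrow> 'w \<Rightarrow> real^'p"
    and q \<eta> m :: real
  assumes M: "prob_space M"
    and \<Theta>: "bounded \<Theta>" "open \<Theta>" "\<theta>s \<in> \<Theta>"
    and TT: "TT \<subseteq> {0..}" "\<forall>x. \<exists>T\<in>TT. x < T"
    and H_cont: "\<And>T \<omega>. T \<in> TT \<Longrightarrow> continuous_on (closure \<Theta>) (H T \<omega>)"
    and H_meas: "\<And>T \<theta>. T \<in> TT \<Longrightarrow> \<theta> \<in> closure \<Theta> \<Longrightarrow> (\<lambda>\<omega>. H T \<omega> \<theta>) \<in> borel_measurable M"
    and \<xi>_pos: "\<And>T \<omega> j. T \<in> TT \<Longrightarrow> \<omega> \<in> space M \<Longrightarrow> \<xi> T \<omega> j > 0"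
    and \<xi>_meas: "\<And>T j. T \<in> TT \<Longrightarrow> (\<lambda>\<omega>. \<xi> T \<omega> j) \<in> borel_measurable M"
    and pen: "\<And>x. pen x \<ge> 0" "pen 0 = 0"
    and \<theta>hat_meas: "\<And>T. T \<in> TT \<Longrightarrow> \<theta>hat T \<in> borel_measurable M"
    and \<theta>hat_in: "\<And>T \<omega>. T \<in> TT \<Longrightarrow> \<omega> \<in> space M \<Longrightarrow> \<theta>hat T \<omega> \<in> closure \<Theta>"
    and \<theta>hat_max: "\<And>T \<omega> \<theta>. T \<in> TT \<Longrightarrow> \<omega> \<in> space M \<Longrightarrow> \<theta> \<in> closure \<Theta> \<Longrightarrow>
        H T \<omega> \<theta> - (\<Sum>j\<in>UNIV. \<xi> T \<omega> j * pen (\<theta> $ j))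
          \<le> H T \<omega> (\<theta>hat T \<omega>) - (\<Sum>j\<in>UNIV. \<xi> T \<omega> j * pen (\<theta>hat T \<omega> $ j))"
    and \<alpha>_inv: "\<And>T j. T \<in> TT \<Longrightarrow> \<alpha> T j \<noteq> 0"
    and \<alpha>_lim: "((\<lambda>T. diag_norm (\<alpha> T)) \<longlongrightarrow> 0) (at_top \<sqinter> principal TT)"
    and q: "0 < q" "q \<le> 1"
    and \<eta>: "0 < \<eta>" "\<eta> \<le> 1"
    and m: "0 < m"
    and moment: "(SUP T\<in>TT. \<integral>\<^sup>+ \<omega>. ennreal (norm (\<chi> j. (\<theta>hat T \<omega> $ j - \<theta>s $ j) / \<alpha> T j) powr m) \<partial>M) < \<infinity>"
    and A5: "\<exists>lam>0. ((\<lambda>x. pen x / \<bar>x\<bar> powr q) \<longlongrightarrow> lam) (at 0)"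
  shows "\<forall>R>0. \<forall>m0>0. \<exists>D>0. \<forall>T\<in>TT.
           emeasure M {\<omega> \<in> space M. {j. \<theta>hat T \<omega> $ j = 0} \<noteq> {j. \<theta>s $ j = 0}}
             < ennreal D * (ennreal (diag_norm (\<alpha> T) powr (m * \<eta>))
                            + cT M q \<eta> \<Theta> \<theta>s (\<alpha> T) (H T) (\<xi> T) m0 R)"
proof (intro allI impI)
  fix R m0 :: real assume R: "R > 0" and m0: "m0 > 0"
  interpret prob_space M by (rule M)
  obtain K where K: "0 \<le> K" and moment_T: "\<And>T. T \<in> TT \<Longrightarrow>
      (\<integral>\<^sup>+ \<omega>. ennreal (norm (\<chi> j. (\<theta>hat T \<omega> $ j - \<theta>s $ j) / \<alpha> T j) powr m) \<partial>M) \<le> ennreal K"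
    using SUP_less_top_imp_uniform_bound [OF moment] by blast
  obtain lam where lam: "lam > 0" "((\<lambda>x. pen x / \<bar>x\<bar> powr q) \<longlongrightarrow> lam) (at 0)"
    using A5 by blast
  obtain \<rho> where \<rho>: "\<rho> > 0" "ball \<theta>s \<rho> \<subseteq> \<Theta>" "\<And>j. \<theta>s $ j \<noteq> 0 \<Longrightarrow> \<rho> \<le> \<bar>\<theta>s $ j\<bar>"
    and \<rho>_pen: "\<And>x. \<bar>x\<bar> < \<rho> \<Longrightarrow> lam / 2 * \<bar>x\<bar> powr q \<le> pen x"
    using radius_for_support_recovery_exists [OF \<Theta>(2,3) lam(2) _ pen(1), of "lam / 2"] lam(1) by auto
  have a_pos: "diag_norm (\<alpha> T) > 0" if "T \<in> TT" for T
    using \<alpha>_inv [OF that] by (rule diag_norm_pos)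
  define D1 where "D1 = K / R powr m + 1 + K / \<rho> powr m"
  define D2 where "D2 = 1 / (lam / 2) powr m0"
  have D: "0 \<le> D1" "0 \<le> D2"
    using K by (simp_all add: D1_def D2_def)
  \<comment> \<open>The bound holds for each \<open>T\<close> separately.\<close>
  have bound: "emeasure M {\<omega> \<in> space M. {j. \<theta>hat T \<omega> $ j = 0} \<noteq> {j. \<theta>s $ j = 0}}
      \<le> ennreal (D1 * diag_norm (\<alpha> T) powr (m * \<eta>)) + ennreal D2 * cT M q \<eta> \<Theta> \<theta>s (\<alpha> T) (H T) (\<xi> T) m0 R"
    if T: "T \<in> TT" for T
    unfolding D1_def D2_def
    by (rule emeasure_support_mismatch_le [OF \<rho> \<alpha>_inv [OF T] \<xi>_pos [OF T] pen(2) \<rho>_pen q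
          half_gt_zero [OF lam(1)] m0 m \<eta> R \<theta>hat_meas [OF T] \<theta>hat_in [OF T] \<theta>hat_max [OF T]
          moment_T [OF T] K])
  show "\<exists>D>0. \<forall>T\<in>TT.
           emeasure M {\<omega> \<in> space M. {j. \<theta>hat T \<omega> $ j = 0} \<noteq> {j. \<theta>s $ j = 0}}
             < ennreal D * (ennreal (diag_norm (\<alpha> T) powr (m * \<eta>))
                            + cT M q \<eta> \<Theta> \<theta>s (\<alpha> T) (H T) (\<xi> T) m0 R)"
    using bound D
    by (intro exI [of _ "D1 + D2 + 1"] conjI ballI ennreal_less_affine_bound)
      (auto simp: less_top [symmetric] dest: a_pos)
qed

end
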